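(* Let $\tilde\varepsilon=(\mathbf F-\hat{\mathbf F})\gamma_0+\varepsilon$. Let $\mathbf X_0$ and $\hat{\mathbf F}_0$ be the submatrices of $\mathbf X$ and $\hat{\mathbf F}$ consisting of the columns indexed by $\mathrm{supp}(\beta_0)$ and $\mathrm{supp}(\gamma_0)$, respectively, and define the events \[ \tilde{\mathcal E}=\Big\{\|n^{-1}(\mathbf X,\hat{\mathbf F})^T\tilde\varepsilon\|_\infty\le c_2\sqrt{(\log p)/n}\Big\},\qquad \tilde{\mathcal E}_0=\Big\{\|n^{-1}(\mathbf X_0,\hat{\mathbf F}_0)^T\tilde\varepsilon\|_\infty\le c_2\sqrt{(\log n)/n}\Big\}, \] where $c_2>2\sqrt2\,\sigma$. Suppose that the columns of $\mathbf X$ all have $L_2$-norm $\sqrt n$ and that $(\mathbf X,\mathbf W)$ is such that $\cos(\omega_{jj})\ge1-\frac{c_2^2\log n}{8K^2T^2n}$ for all $1\le j\le K$. Then, conditionally on $(\mathbf X,\mathbf W)$, \[ P(\tilde{\mathcal E}\cap\tilde{\mathcal E}_0)\ \ge\ 1-\frac{4\sqrt2\,\sigma}{c_2\sqrt{\pi\log p}}\,p^{1-\frac{c_2^2}{8\sigma^2}}-\frac{2\sqrt2\,\sigma s}{c_2\sqrt{\pi\log n}}\,n^{-\frac{c_2^2}{8\sigma^2}}, \] and this lower bound converges to one as $n\to\infty$.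
   Context: Model: $\mathbf y=\mathbf X\beta_0+\mathbf F\gamma_0+\varepsilon$, where $\mathbf X$ is an $n\times p$ random design matrix with columns $\mathbf x_1,\dots,\mathbf x_p$, $\mathbf W$ is an $n\times q$ random covariate matrix whose rows have mean zero and covariance $\Sigma_W$, $\varepsilon\sim N(0,\sigma^2I_n)$ is independent of $(\mathbf X,\mathbf W)$, $\beta_0\in\mathbb R^p$, and $\gamma_0\in\mathbb R^K$ with $\|\gamma_0\|_\infty\le T$ for a constant $T>0$. Assume $p\ge n$ and $p\ge K$. Let $u_1,\dots,u_K$ be the top-$K$ eigenvectors of $\Sigma_W$ and $\hat u_1,\dots,\hat u_K$ the top-$K$ eigenvectors of $n^{-1}\mathbf W^T\mathbf W$; $\mathbf F=(\mathbf f_1,\dots,\mathbf f_K)$ with $\mathbf f_j=\mathbf Wu_j$ rescaled to $\|\mathbf f_j\|_2=\sqrt n$, and $\hat{\mathbf F}=(\hat{\mathbf f}_1,\dots,\hat{\mathbf f}_K)$ with $\hat{\mathbf f}_j=\mathbf W\hat u_j$ rescaled to $\|\hat{\mathbf f}_j\|_2=\sqrt n$. $\omega_{jj}$ is the angle between $\hat{\mathbf f}_j$ and $\mathbf f_j$. $s=\|\beta_0\|_0+\|\gamma_0\|_0$. *)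

theory Defs
  imports "HOL-Probability.Probability"
begin

text \<open>Vectors of length m are functions nat => real (only indices < m matter);
  an m x k matrix A is a function nat => nat => real, entry A i j for i < m, j < k.\<close>

definition dotv :: "nat \<Rightarrow> (nat \<Rightarrow> real) \<Rightarrow> (nat \<Rightarrow> real) \<Rightarrow> real" where
  "dotv m a b = (\<Sum>i<m. a i * b i)"

definition normv :: "nat \<Rightarrow> (nat \<Rightarrow> real) \<Rightarrow> real" where
  "normv m a = sqrt (dotv m a a)"

definition col :: "(nat \<Rightarrow> nat \<Rightarrow> real) \<Rightarrow> nat \<Rightarrow> (nat \<Rightarrow> real)" where
  "col A j = (\<lambda>i. A i j)"

definition mat_vec :: "nat \<Rightarrow> (nat \<Rightarrow> nat \<Rightarrow> real) \<Rightarrow> (nat \<Rightarrow> real) \<Rightarrow> (nat \<Rightarrow> real)" where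
  "mat_vec k A v = (\<lambda>i. \<Sum>l<k. A i l * v l)"

definition vcos :: "nat \<Rightarrow> (nat \<Rightarrow> real) \<Rightarrow> (nat \<Rightarrow> real) \<Rightarrow> real" where
  "vcos m a b = dotv m a b / (normv m a * normv m b)"

text \<open>u 0, ..., u (K-1) are top-K eigenvectors of the symmetric q x q matrix S:
  orthonormal eigenvectors whose eigenvalues are the K largest (with multiplicity),
  listed in non-increasing order.\<close>
definition top_eigvecs :: "nat \<Rightarrow> (nat \<Rightarrow> nat \<Rightarrow> real) \<Rightarrow> nat \<Rightarrow> (nat \<Rightarrow> nat \<Rightarrow> real) \<Rightarrow> bool" where
  "top_eigvecs q S K u \<longleftrightarrow>
     (\<exists>lam :: nat \<Rightarrow> real.
        (\<forall>j<K. \<forall>j'<K. dotv q (u j) (u j') = (if j = j' then 1 else 0)) \<and>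
        (\<forall>j<K. \<forall>i<q. mat_vec q S (u j) i = lam j * u j i) \<and>
        (\<forall>j<K. \<forall>j'<K. j \<le> j' \<longrightarrow> lam j' \<le> lam j) \<and>
        (\<forall>v \<mu>. (\<forall>j<K. dotv q v (u j) = 0) \<and> (\<exists>i<q. v i \<noteq> 0) \<and>
               (\<forall>i<q. mat_vec q S v i = \<mu> * v i) \<longrightarrow> (\<forall>j<K. \<mu> \<le> lam j)))"

definition sample_cov :: "nat \<Rightarrow> (nat \<Rightarrow> nat \<Rightarrow> real) \<Rightarrow> (nat \<Rightarrow> nat \<Rightarrow> real)" where
  "sample_cov n W = (\<lambda>a b. (\<Sum>i<n. W i a * W i b) / real n)"

definition factor_mat :: "nat \<Rightarrow> nat \<Rightarrow> (nat \<Rightarrow> nat \<Rightarrow> real) \<Rightarrow> (nat \<Rightarrow> nat \<Rightarrow> real) \<Rightarrow> (nat \<Rightarrow> nat \<Rightarrow> real)" where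
  "factor_mat n q W u = (\<lambda>i j. sqrt (real n) * mat_vec q W (u j) i / normv n (mat_vec q W (u j)))"

definition supp :: "nat \<Rightarrow> (nat \<Rightarrow> real) \<Rightarrow> nat set" where
  "supp m b = {k. k < m \<and> b k \<noteq> 0}"

definition gauss_noise :: "nat \<Rightarrow> real \<Rightarrow> (nat \<Rightarrow> real) measure" where
  "gauss_noise n \<sigma> = PiM {..<n} (\<lambda>_. density lborel (normal_density 0 \<sigma>))"

definition lemma2_bound :: "real \<Rightarrow> real \<Rightarrow> nat \<Rightarrow> nat \<Rightarrow> nat \<Rightarrow> real" where
  "lemma2_bound \<sigma> c2 n p s =
     1 - 4 * sqrt 2 * \<sigma> / (c2 * sqrt (pi * ln (real p))) * real p powr (1 - c2\<^sup>2 / (8 * \<sigma>\<^sup>2))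
       - 2 * sqrt 2 * \<sigma> * real s / (c2 * sqrt (pi * ln (real n))) * real n powr (- c2\<^sup>2 / (8 * \<sigma>\<^sup>2))"

end

theory Submission
  imports Defs "HOL-Real_Asymp.Real_Asymp"
begin

text \<open>
  Write b = (F - Fhat) gamma0, so that epst = b + eps. The angle hypothesis makes every column of
  F - Fhat short, so by Cauchy-Schwarz |a' b| <= (c2/2) sqrt (n log n) for every column a with
  |a|^2 <= n. A deviation |a' epst| > c2 sqrt (n L) with L >= log n therefore forces
  |a' eps| > (c2/2) sqrt (n L). As a' eps is centred normal with standard deviation at most
  sigma sqrt n, the Mills ratio bound P(|Z| > t) <= 2 S / (t sqrt (2 pi)) exp (-t^2 / (2 S^2)) for
  Z ~ N(0, S^2) bounds this probability by 2 sqrt 2 sigma / (c2 sqrt (pi L)) exp (-c2^2 L / (8 sigma^2)).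
  A union bound over the p + K <= 2p columns with L = log p and over the s support columns with
  L = log n gives the stated bound, which tends to one because c2^2 > 8 sigma^2 makes
  p^(1 - c2^2 / (8 sigma^2)) vanish.
\<close>

lemma ball_Plus_iff: "(\<forall>x\<in>A <+> B. P x) \<longleftrightarrow> (\<forall>a\<in>A. P (Inl a)) \<and> (\<forall>b\<in>B. P (Inr b))"
  by auto

lemma (in prob_space) prob_Int_ge:
  assumes "A \<in> events" "B \<in> events"
  shows "prob (A \<inter> B) \<ge> prob A + prob B - 1"
proof -
  have "prob (A - B) \<le> prob (space M - B)"
    using assms by (intro finite_measure_mono) (auto dest: sets.sets_into_space)
  then show ?thesis
    using assms finite_measure_Diff'[of A B] prob_compl[of B] by simp
qed

section \<open>The Gaussian tail\<close>

definition normal_tail_bound :: "real \<Rightarrow> real \<Rightarrow> real" where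
  "normal_tail_bound S t = 2 * S / (t * sqrt (2 * pi)) * exp (- t\<^sup>2 / (2 * S\<^sup>2))"

lemma normal_tail_bound_nonneg: "S \<ge> 0 \<Longrightarrow> t \<ge> 0 \<Longrightarrow> normal_tail_bound S t \<ge> 0"
  unfolding normal_tail_bound_def by simp

lemma normal_tail_bound_mono:
  assumes "0 \<le> S" "S \<le> S'" "t \<ge> 0"
  shows "normal_tail_bound S t \<le> normal_tail_bound S' t"
proof (cases "S = 0")
  case True
  then show ?thesis
    using assms normal_tail_bound_nonneg by (simp add: normal_tail_bound_def)
next
  case False
  then have "t\<^sup>2 / (2 * S'\<^sup>2) \<le> t\<^sup>2 / (2 * S\<^sup>2)"
    using assms by (intro divide_left_mono mult_left_mono power_mono) auto
  then show ?thesis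
    using assms unfolding normal_tail_bound_def by (intro mult_mono divide_right_mono) auto
qed

lemma normal_tail_bound_scale:
  assumes "r > 0"
  shows "normal_tail_bound (r * S) (r * t) = normal_tail_bound S t"
proof -
  have "(r * t)\<^sup>2 / (2 * (r * S)\<^sup>2) = t\<^sup>2 / (2 * S\<^sup>2)"
    using assms by (simp add: power_mult_distrib)
  then show ?thesis
    using assms unfolding normal_tail_bound_def by simp
qed

lemma nn_integral_normal_density_mult_id_atLeast:
  assumes "S > 0" "t > 0"
  shows "(\<integral>\<^sup>+y. ennreal (normal_density 0 S y * y / t) * indicator {t..} y \<partial>lborel)
        = ennreal (S\<^sup>2 * normal_density 0 S t / t)"
proof -
  have deriv: "((\<lambda>y. - (S\<^sup>2 * normal_density 0 S y / t))
      has_real_derivative normal_density 0 S x * x / t) (at x)" for x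
    using assms unfolding normal_density_def by (auto intro!: derivative_eq_intros)
  have "((\<lambda>y. exp (- (y - 0)\<^sup>2 / (2 * S\<^sup>2))) \<longlongrightarrow> 0) at_top"
    using assms by real_asymp
  then have "((\<lambda>y. - (S\<^sup>2 * (1 / sqrt (2 * pi * S\<^sup>2)) / t) * exp (- (y - 0)\<^sup>2 / (2 * S\<^sup>2)))
      \<longlongrightarrow> - (S\<^sup>2 * (1 / sqrt (2 * pi * S\<^sup>2)) / t) * 0) at_top"
    by (intro tendsto_mult tendsto_const)
  then have lim: "((\<lambda>y. - (S\<^sup>2 * normal_density 0 S y / t)) \<longlongrightarrow> 0) at_top"
    unfolding normal_density_def by simp
  have "(\<integral>\<^sup>+y. ennreal (normal_density 0 S y * y / t) * indicator {t..} y \<partial>lborel)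
      = 0 - (- (S\<^sup>2 * normal_density 0 S t / t))"
    by (rule nn_integral_FTC_atLeast[OF _ deriv _ lim]) (use assms in auto)
  then show ?thesis by simp
qed

text \<open>Mills ratio: on \<open>|y| > t\<close> the density is dominated by \<open>normal_density 0 S y * |y| / t\<close>,
  whose integral over each half-line is explicit.\<close>
lemma nn_integral_normal_density_abs_greater_le:
  assumes S: "S > 0" and t: "t > 0"
  shows "(\<integral>\<^sup>+y. ennreal (normal_density 0 S y) * indicator {y. t < \<bar>y\<bar>} y \<partial>lborel)
        \<le> ennreal (normal_tail_bound S t)"
proof -
  define h where "h = (\<lambda>y. ennreal (normal_density 0 S y * y / t) * indicator {t..} y)"
  have h_measurable[measurable]: "h \<in> borel_measurable borel"
    unfolding h_def by measurable
  have dominated: "ennreal (normal_density 0 S y) * indicator {y. t < \<bar>y\<bar>} y \<le> h y + h (0 + -1 * y)"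
    for y
  proof -
    have "normal_density 0 S y = normal_density 0 S \<bar>y\<bar>"
      by (simp add: normal_density_def)
    also have "\<dots> \<le> normal_density 0 S \<bar>y\<bar> * \<bar>y\<bar> / t" if "t < \<bar>y\<bar>"
      using that t by (simp add: le_divide_eq mult_left_mono)
    finally show ?thesis
      unfolding h_def using t
      by (cases "0 < y") (auto simp: indicator_def normal_density_def intro!: ennreal_leI)
  qed
  have "(\<integral>\<^sup>+y. ennreal (normal_density 0 S y) * indicator {y. t < \<bar>y\<bar>} y \<partial>lborel)
      \<le> (\<integral>\<^sup>+y. h y + h (0 + -1 * y) \<partial>lborel)"
    by (rule nn_integral_mono[OF dominated])
  also have "\<dots> = (\<integral>\<^sup>+y. h y \<partial>lborel) + (\<integral>\<^sup>+y. h (0 + -1 * y) \<partial>lborel)"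
    by (rule nn_integral_add) auto
  also have "(\<integral>\<^sup>+y. h (0 + -1 * y) \<partial>lborel) = (\<integral>\<^sup>+y. h y \<partial>lborel)"
    using nn_integral_real_affine[OF h_measurable, of "-1" 0] by simp
  also have "(\<integral>\<^sup>+y. h y \<partial>lborel) = ennreal (S\<^sup>2 * normal_density 0 S t / t)"
    unfolding h_def by (rule nn_integral_normal_density_mult_id_atLeast[OF S t])
  also have "ennreal (S\<^sup>2 * normal_density 0 S t / t) + ennreal (S\<^sup>2 * normal_density 0 S t / t)
      = ennreal (normal_tail_bound S t)"
    using S t unfolding normal_tail_bound_def normal_density_def
    by (subst ennreal_plus[symmetric]) (auto simp: real_sqrt_mult field_simps power2_eq_square)
  finally show ?thesis .
qed

section \<open>Coordinate vectors and factor columns\<close>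

lemma dotv_self_nonneg: "dotv n a a \<ge> 0"
  unfolding dotv_def by (intro sum_nonneg) auto

lemma dotv_commute: "dotv n a b = dotv n b a"
  unfolding dotv_def by (simp add: mult.commute)

lemma dotv_add_right: "dotv n a (\<lambda>i. b i + c i) = dotv n a b + dotv n a c"
  unfolding dotv_def by (simp add: algebra_simps sum.distrib)

lemma dotv_eq_0_if_self_eq_0:
  assumes "dotv n a a = 0"
  shows "dotv n a b = 0"
proof -
  have "\<forall>i\<in>{..<n}. a i * a i = 0"
    using assms unfolding dotv_def by (subst sum_nonneg_eq_0_iff[symmetric]) auto
  then show ?thesis
    unfolding dotv_def by auto
qed

lemma abs_dotv_le: "\<bar>dotv n a b\<bar> \<le> sqrt (dotv n a a) * sqrt (dotv n b b)"
proof -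
  have "\<bar>dotv n a b\<bar> \<le> (\<Sum>i<n. \<bar>a i\<bar> * \<bar>b i\<bar>)"
    unfolding dotv_def by (rule order_trans[OF sum_abs]) (simp add: abs_mult)
  also have "\<dots> \<le> L2_set a {..<n} * L2_set b {..<n}"
    by (rule L2_set_mult_ineq)
  also have "\<dots> = sqrt (dotv n a a) * sqrt (dotv n b b)"
    unfolding L2_set_def dotv_def by (simp add: power2_eq_square)
  finally show ?thesis .
qed

text \<open>The rescaling in \<open>factor_mat\<close> divides by zero when \<open>W u_j = 0\<close>, leaving a zero column.\<close>
lemma dotv_col_factor_mat_self:
  "dotv n (col (factor_mat n q W u) j) (col (factor_mat n q W u) j) \<in> {0, real n}"
proof -
  define w where "w = mat_vec q W (u j)"
  define N where "N = normv n w"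
  have N2: "N\<^sup>2 = dotv n w w"
    unfolding N_def normv_def using dotv_self_nonneg by simp
  have "dotv n (col (factor_mat n q W u) j) (col (factor_mat n q W u) j)
      = (\<Sum>i<n. real n * (w i * w i) / N\<^sup>2)"
    unfolding dotv_def col_def factor_mat_def w_def[symmetric] N_def[symmetric]
    by (intro sum.cong refl) (simp add: power2_eq_square)
  also have "\<dots> = real n * dotv n w w / N\<^sup>2"
    unfolding dotv_def by (simp add: sum_divide_distrib[symmetric] sum_distrib_left)
  finally show ?thesis
    using N2 by (cases "N = 0") auto
qed

lemma dotv_diff_self_le_vcos:
  assumes f: "dotv n f f \<in> {0, real n}" and g: "dotv n g g \<in> {0, real n}"
  shows "dotv n (\<lambda>i. f i - g i) (\<lambda>i. f i - g i) \<le> 2 * real n * (1 - vcos n g f)"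
proof -
  have expand: "dotv n (\<lambda>i. f i - g i) (\<lambda>i. f i - g i) = dotv n f f + dotv n g g - 2 * dotv n g f"
    unfolding dotv_def
    by (simp add: algebra_simps sum.distrib sum_subtractf sum_distrib_left power2_eq_square)
  show ?thesis
  proof (cases "dotv n f f = 0 \<or> dotv n g g = 0")
    case True
    then have "dotv n g f = 0"
      using dotv_eq_0_if_self_eq_0 dotv_commute by metis
    then show ?thesis
      unfolding expand vcos_def using f g by auto
  next
    case False
    then have ff: "dotv n f f = real n" and gg: "dotv n g g = real n"
      using f g by auto
    then have "real n > 0" "vcos n g f = dotv n g f / real n"
      using False unfolding vcos_def normv_def by auto
    then show ?thesis
      unfolding expand ff gg by (simp add: field_simps)
  qed
qed

lemma abs_dotv_weighted_sum_le:
  assumes T: "\<forall>j<K. \<bar>g j\<bar> \<le> T" and d: "\<forall>j<K. sqrt (dotv n (d j) (d j)) \<le> r"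
    and a: "dotv n a a \<le> real n"
  shows "\<bar>dotv n a (\<lambda>i. \<Sum>j<K. d j i * g j)\<bar> \<le> real K * T * r * sqrt (real n)"
proof -
  have "dotv n a (\<lambda>i. \<Sum>j<K. d j i * g j) = (\<Sum>j<K. g j * dotv n a (d j))"
    unfolding dotv_def
    by (simp add: sum_distrib_left sum_distrib_right mult_ac sum.swap[of _ "{..<n}"])
  also have "\<bar>\<dots>\<bar> \<le> (\<Sum>j<K. \<bar>g j\<bar> * \<bar>dotv n a (d j)\<bar>)"
    by (rule order_trans[OF sum_abs]) (simp add: abs_mult)
  also have "\<dots> \<le> (\<Sum>j<K. T * (sqrt (real n) * r))"
  proof (rule sum_mono)
    fix j assume j: "j \<in> {..<K}"
    have "\<bar>dotv n a (d j)\<bar> \<le> sqrt (dotv n a a) * sqrt (dotv n (d j) (d j))"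
      by (rule abs_dotv_le)
    also have "\<dots> \<le> sqrt (real n) * r"
      using a d j by (intro mult_mono) (auto simp: dotv_self_nonneg)
    finally show "\<bar>g j\<bar> * \<bar>dotv n a (d j)\<bar> \<le> T * (sqrt (real n) * r)"
      using T j by (intro mult_mono) auto
  qed
  finally show ?thesis
    by (simp add: mult_ac)
qed

lemma abs_dotv_factor_mat_diff_le:
  fixes n q :: nat and W u uhat :: "nat \<Rightarrow> nat \<Rightarrow> real"
  defines "F \<equiv> factor_mat n q W u" and "Fhat \<equiv> factor_mat n q W uhat"
  assumes T: "T > 0" and c: "c > 0" and L: "L \<ge> 0" and n: "n > 0"
    and g: "\<forall>j<K. \<bar>g j\<bar> \<le> T"
    and angle: "\<forall>j<K. vcos n (col Fhat j) (col F j) \<ge> 1 - c\<^sup>2 * L / (8 * real K ^ 2 * T\<^sup>2 * real n)"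
    and a: "dotv n a a \<le> real n"
  shows "\<bar>dotv n a (\<lambda>i. \<Sum>j<K. (F i j - Fhat i j) * g j)\<bar> \<le> c * sqrt (real n * L) / 2"
proof -
  define r where "r = c * sqrt L / (2 * real K * T)"
  have "sqrt (dotv n (\<lambda>i. col F j i - col Fhat j i) (\<lambda>i. col F j i - col Fhat j i)) \<le> r"
    if "j < K" for j
  proof -
    have "dotv n (\<lambda>i. col F j i - col Fhat j i) (\<lambda>i. col F j i - col Fhat j i)
        \<le> 2 * real n * (1 - vcos n (col Fhat j) (col F j))"
      unfolding F_def Fhat_def by (intro dotv_diff_self_le_vcos dotv_col_factor_mat_self)
    also have "\<dots> \<le> 2 * real n * (c\<^sup>2 * L / (8 * real K ^ 2 * T\<^sup>2 * real n))"
      using angle that by (intro mult_left_mono) auto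
    also have "\<dots> = r\<^sup>2"
      unfolding r_def using n L by (simp add: power_divide power_mult_distrib mult_ac)
    finally show ?thesis
      using c L T by (simp add: real_le_lsqrt r_def)
  qed
  then have "\<bar>dotv n a (\<lambda>i. \<Sum>j<K. (\<lambda>j i. col F j i - col Fhat j i) j i * g j)\<bar> \<le> real K * T * r * sqrt (real n)"
    by (intro abs_dotv_weighted_sum_le g a) auto
  also have "\<dots> \<le> c * sqrt (real n * L) / 2"
    unfolding r_def using c L T by (cases "K = 0") (auto simp: real_sqrt_mult)
  finally show ?thesis
    by (simp add: col_def)
qed

lemma dotv_design_col_self_le:
  assumes X: "\<forall>k<p. normv n (col X k) = sqrt (real n)" and x: "x \<in> {..<p} <+> {..<K}"
  shows "dotv n (case_sum (col X) (col (factor_mat n q W u)) x) (case_sum (col X) (col (factor_mat n q W u)) x)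
    \<le> real n"
proof (cases x)
  case (Inl k)
  then show ?thesis
    using x X unfolding normv_def by (auto simp: dotv_self_nonneg)
next
  case (Inr j)
  then show ?thesis
    using dotv_col_factor_mat_self[of n q W u j] by auto
qed

section \<open>Linear forms of the Gaussian noise\<close>

lemma prob_space_gauss_noise: "\<sigma> > 0 \<Longrightarrow> prob_space (gauss_noise n \<sigma>)"
  unfolding gauss_noise_def by (intro prob_space_PiM prob_space_normal_density) auto

lemma distr_gauss_noise_component:
  assumes i: "i < n" and \<sigma>: "\<sigma> > 0"
  shows "distr (gauss_noise n \<sigma>) borel (\<lambda>e. e i) = density lborel (normal_density 0 \<sigma>)"
proof -
  interpret product_prob_space "\<lambda>_. density lborel (normal_density 0 \<sigma>)" "{..<n}"
    by (intro product_prob_spaceI prob_space_normal_density) (use \<sigma> in auto)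
  have "distr (gauss_noise n \<sigma>) borel (\<lambda>e. e i)
      = distr (gauss_noise n \<sigma>) (density lborel (normal_density 0 \<sigma>)) (\<lambda>e. e i)"
    by (rule distr_cong) auto
  also have "\<dots> = density lborel (normal_density 0 \<sigma>)"
    unfolding gauss_noise_def using i by (intro PiM_component) auto
  finally show ?thesis .
qed

lemma distributed_gauss_noise_component:
  assumes "i < n" and "\<sigma> > 0"
  shows "distributed (gauss_noise n \<sigma>) lborel (\<lambda>e. e i) (normal_density 0 \<sigma>)"
  unfolding distributed_def
proof (intro conjI)
  show "distr (gauss_noise n \<sigma>) lborel (\<lambda>e. e i) = density lborel (normal_density 0 \<sigma>)"
    using distr_gauss_noise_component[OF assms] by (metis distr_cong sets_lborel)
  show "(\<lambda>e. e i) \<in> measurable (gauss_noise n \<sigma>) lborel"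
    unfolding gauss_noise_def using assms by (simp add: measurable_component_singleton)
qed auto

lemma indep_vars_gauss_noise_components:
  assumes n: "n > 0" and \<sigma>: "\<sigma> > 0"
  shows "prob_space.indep_vars (gauss_noise n \<sigma>) (\<lambda>_. borel) (\<lambda>i e. e i) {..<n}"
proof -
  interpret prob_space "gauss_noise n \<sigma>"
    by (rule prob_space_gauss_noise[OF \<sigma>])
  have sets: "sets (gauss_noise n \<sigma>) = sets (PiM {..<n} (\<lambda>_. borel :: real measure))"
    unfolding gauss_noise_def by (intro sets_PiM_cong) auto
  show ?thesis
  proof (subst indep_vars_iff_distr_eq_PiM')
    show "{..<n} \<noteq> {}"
      using n by auto
    show "random_variable borel (\<lambda>e. e i)" if "i \<in> {..<n}" for i
      unfolding gauss_noise_def using that by (simp add: measurable_component_singleton)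
    have "distr (gauss_noise n \<sigma>) (PiM {..<n} (\<lambda>_. borel)) (\<lambda>e. \<lambda>i\<in>{..<n}. e i)
        = distr (gauss_noise n \<sigma>) (PiM {..<n} (\<lambda>_. borel)) (\<lambda>e. e)"
      by (rule distr_cong) (auto simp: gauss_noise_def space_PiM PiE_def extensional_def restrict_def)
    also have "\<dots> = gauss_noise n \<sigma>"
      by (rule distr_id2[OF sets[symmetric]])
    also have "\<dots> = PiM {..<n} (\<lambda>i. distr (gauss_noise n \<sigma>) borel (\<lambda>e. e i))"
      unfolding gauss_noise_def[of n \<sigma>]
      by (intro PiM_cong) (auto simp: distr_gauss_noise_component[OF _ \<sigma>, unfolded gauss_noise_def])
    finally show "distr (gauss_noise n \<sigma>) (PiM {..<n} (\<lambda>_. borel)) (\<lambda>e. \<lambda>i\<in>{..<n}. e i)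
        = PiM {..<n} (\<lambda>i. distr (gauss_noise n \<sigma>) borel (\<lambda>e. e i))" .
  qed
qed

lemma dotv_measurable[measurable]: "dotv n a \<in> borel_measurable (gauss_noise n \<sigma>)"
  unfolding dotv_def gauss_noise_def by measurable

lemma distributed_gauss_noise_dotv:
  assumes \<sigma>: "\<sigma> > 0" and a: "dotv n a a > 0"
  shows "distributed (gauss_noise n \<sigma>) lborel (dotv n a) (normal_density 0 (\<sigma> * normv n a))"
proof -
  interpret prob_space "gauss_noise n \<sigma>"
    by (rule prob_space_gauss_noise[OF \<sigma>])
  define I where "I = {i. i < n \<and> a i \<noteq> 0}"
  have I: "finite I" "I \<subseteq> {..<n}"
    unfolding I_def by auto
  have dotv_I: "dotv n a e = (\<Sum>i\<in>I. a i * e i)" for e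
    unfolding dotv_def I_def by (rule sum.mono_neutral_right) auto
  have "I \<noteq> {}"
    using a by (auto simp: dotv_I)
  then have "n > 0"
    using I by auto
  have indep: "indep_vars (\<lambda>_. borel) (\<lambda>i e. a i * e i) I"
    using indep_vars_compose2[OF indep_vars_subset[OF indep_vars_gauss_noise_components[OF \<open>n > 0\<close> \<sigma>] I(2)],
        of "\<lambda>i y. a i * y" "\<lambda>_. borel"]
    by simp
  have "distributed (gauss_noise n \<sigma>) lborel (\<lambda>e. \<Sum>i\<in>I. a i * e i)
      (normal_density (\<Sum>i\<in>I. 0) (sqrt (\<Sum>i\<in>I. (\<bar>a i\<bar> * \<sigma>)\<^sup>2)))"
  proof (rule sum_indep_normal[OF I(1) \<open>I \<noteq> {}\<close> indep])
    fix i assume i: "i \<in> I"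
    then show "0 < \<bar>a i\<bar> * \<sigma>"
      using \<sigma> by (auto simp: I_def)
    have "distributed (gauss_noise n \<sigma>) lborel (\<lambda>e. 0 + a i * e i) (normal_density (0 + a i * 0) (\<bar>a i\<bar> * \<sigma>))"
      by (rule normal_density_affine[OF distributed_gauss_noise_component \<sigma>]) (use i \<sigma> in \<open>auto simp: I_def\<close>)
    then show "distributed (gauss_noise n \<sigma>) lborel (\<lambda>e. a i * e i) (normal_density 0 (\<bar>a i\<bar> * \<sigma>))"
      by simp
  qed
  moreover have "(\<Sum>i\<in>I. (\<bar>a i\<bar> * \<sigma>)\<^sup>2) = \<sigma>\<^sup>2 * dotv n a a"
    unfolding dotv_I by (simp add: sum_distrib_left power_mult_distrib power2_eq_square mult_ac)
  then have "sqrt (\<Sum>i\<in>I. (\<bar>a i\<bar> * \<sigma>)\<^sup>2) = \<sigma> * normv n a"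
    using \<sigma> unfolding normv_def by (simp add: real_sqrt_mult)
  ultimately show ?thesis
    by (simp add: dotv_I[abs_def])
qed

lemma gauss_noise_dotv_tail_le:
  assumes \<sigma>: "\<sigma> > 0" and t: "t > 0"
  shows "measure (gauss_noise n \<sigma>) {e \<in> space (gauss_noise n \<sigma>). t < \<bar>dotv n a e\<bar>}
      \<le> normal_tail_bound (\<sigma> * normv n a) t"
proof (cases "dotv n a a = 0")
  case True
  then show ?thesis
    using t dotv_eq_0_if_self_eq_0[OF True] by (simp add: normal_tail_bound_def normv_def)
next
  case False
  interpret prob_space "gauss_noise n \<sigma>"
    by (rule prob_space_gauss_noise[OF \<sigma>])
  define S where "S = \<sigma> * normv n a"
  have a: "dotv n a a > 0"
    using False dotv_self_nonneg[of n a] by simp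
  then have S: "S > 0"
    unfolding S_def normv_def using \<sigma> by simp
  have "emeasure (gauss_noise n \<sigma>) {e \<in> space (gauss_noise n \<sigma>). t < \<bar>dotv n a e\<bar>}
      = (\<integral>\<^sup>+y. ennreal (normal_density 0 S y) * indicator {y. t < \<bar>y\<bar>} y \<partial>lborel)"
    unfolding S_def using distributed_emeasure[OF distributed_gauss_noise_dotv[OF \<sigma> a], of "{y. t < \<bar>y\<bar>}"]
    by (simp add: vimage_def Int_def conj_commute)
  also have "\<dots> \<le> ennreal (normal_tail_bound S t)"
    by (rule nn_integral_normal_density_abs_greater_le[OF S t])
  finally show ?thesis
    unfolding S_def emeasure_eq_measure
    using S t by (simp add: ennreal_le_iff normal_tail_bound_nonneg S_def)
qed

section \<open>Deviations of the perturbed noise\<close>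

definition correlation_event ::
    "nat \<Rightarrow> real \<Rightarrow> ('j \<Rightarrow> nat \<Rightarrow> real) \<Rightarrow> (nat \<Rightarrow> real) \<Rightarrow> real \<Rightarrow> 'j set \<Rightarrow> (nat \<Rightarrow> real) set" where
  "correlation_event n \<sigma> A b r J = {e \<in> space (gauss_noise n \<sigma>).
     \<forall>j\<in>J. \<bar>dotv n (A j) (\<lambda>i. b i + e i) / real n\<bar> \<le> r}"

lemma correlation_event_in_sets:
  "finite J \<Longrightarrow> correlation_event n \<sigma> A b r J \<in> sets (gauss_noise n \<sigma>)"
  unfolding correlation_event_def dotv_add_right by measurable

lemma abs_dotv_noise_gt_if_deviation:
  assumes n: "n > 0" and bias: "\<bar>dotv n a b\<bar> \<le> c * sqrt (real n * L) / 2"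
    and deviation: "c * sqrt (L / real n) < \<bar>dotv n a (\<lambda>i. b i + e i) / real n\<bar>"
  shows "c * sqrt (real n * L) / 2 < \<bar>dotv n a e\<bar>"
proof -
  have "real n * sqrt (L / real n) = sqrt ((real n)\<^sup>2 * (L / real n))"
    by (subst real_sqrt_mult) simp
  also have "(real n)\<^sup>2 * (L / real n) = real n * L"
    using n by (simp add: power2_eq_square)
  finally have "c * sqrt (L / real n) * real n = c * sqrt (real n * L)"
    by (simp add: algebra_simps)
  moreover have "c * sqrt (L / real n) * real n < \<bar>dotv n a b + dotv n a e\<bar>"
    using deviation n by (simp add: pos_less_divide_eq dotv_add_right)
  ultimately show ?thesis
    using bias abs_triangle_ineq[of "dotv n a b" "dotv n a e"] by linarith
qed

lemma gauss_noise_deviation_le: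
  assumes \<sigma>: "\<sigma> > 0" and c: "c > 0" and n: "n > 0" and L: "L > 0"
    and a: "dotv n a a \<le> real n" and bias: "\<bar>dotv n a b\<bar> \<le> c * sqrt (real n * L) / 2"
  shows "measure (gauss_noise n \<sigma>)
      {e \<in> space (gauss_noise n \<sigma>). c * sqrt (L / real n) < \<bar>dotv n a (\<lambda>i. b i + e i) / real n\<bar>}
    \<le> normal_tail_bound \<sigma> (c * sqrt L / 2)"
proof -
  interpret prob_space "gauss_noise n \<sigma>"
    by (rule prob_space_gauss_noise[OF \<sigma>])
  define t where "t = sqrt (real n) * (c * sqrt L / 2)"
  have t: "t > 0" "t = c * sqrt (real n * L) / 2"
    unfolding t_def using c n L by (auto simp: real_sqrt_mult)
  have "{e \<in> space (gauss_noise n \<sigma>). c * sqrt (L / real n) < \<bar>dotv n a (\<lambda>i. b i + e i) / real n\<bar>}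
      \<subseteq> {e \<in> space (gauss_noise n \<sigma>). t < \<bar>dotv n a e\<bar>}"
    using abs_dotv_noise_gt_if_deviation[OF n bias] t(2) by blast
  then have "measure (gauss_noise n \<sigma>)
      {e \<in> space (gauss_noise n \<sigma>). c * sqrt (L / real n) < \<bar>dotv n a (\<lambda>i. b i + e i) / real n\<bar>}
    \<le> measure (gauss_noise n \<sigma>) {e \<in> space (gauss_noise n \<sigma>). t < \<bar>dotv n a e\<bar>}"
    by (rule finite_measure_mono) measurable
  also have "\<dots> \<le> normal_tail_bound (\<sigma> * normv n a) t"
    by (rule gauss_noise_dotv_tail_le[OF \<sigma> t(1)])
  also have "\<dots> \<le> normal_tail_bound (sqrt (real n) * \<sigma>) t"
    using \<sigma> a t(1) unfolding normv_def
    by (intro normal_tail_bound_mono) (auto simp: dotv_self_nonneg mult.commute)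
  also have "\<dots> = normal_tail_bound \<sigma> (c * sqrt L / 2)"
    unfolding t_def using n by (intro normal_tail_bound_scale) simp
  finally show ?thesis .
qed

lemma prob_correlation_event_ge:
  fixes A :: "'j \<Rightarrow> nat \<Rightarrow> real"
  assumes \<sigma>: "\<sigma> > 0" and c: "c > 0" and n: "n > 0" and L: "L > 0" and J: "finite J"
    and cols: "\<And>j. j \<in> J \<Longrightarrow> dotv n (A j) (A j) \<le> real n"
    and bias: "\<And>j. j \<in> J \<Longrightarrow> \<bar>dotv n (A j) b\<bar> \<le> c * sqrt (real n * L) / 2"
  shows "measure (gauss_noise n \<sigma>) (correlation_event n \<sigma> A b (c * sqrt (L / real n)) J)
    \<ge> 1 - real (card J) * normal_tail_bound \<sigma> (c * sqrt L / 2)"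
proof -
  interpret prob_space "gauss_noise n \<sigma>"
    by (rule prob_space_gauss_noise[OF \<sigma>])
  define deviation where "deviation j =
    {e \<in> space (gauss_noise n \<sigma>). c * sqrt (L / real n) < \<bar>dotv n (A j) (\<lambda>i. b i + e i) / real n\<bar>}" for j
  have deviation_events: "deviation j \<in> events" for j
    unfolding deviation_def dotv_add_right by measurable
  have "prob (\<Union>j\<in>J. deviation j) \<le> (\<Sum>j\<in>J. prob (deviation j))"
    by (rule finite_measure_subadditive_finite[OF J]) (use deviation_events in auto)
  also have "\<dots> \<le> (\<Sum>j\<in>J. normal_tail_bound \<sigma> (c * sqrt L / 2))"
    unfolding deviation_def by (intro sum_mono gauss_noise_deviation_le[OF \<sigma> c n L] cols bias)
  finally have "prob (\<Union>j\<in>J. deviation j) \<le> real (card J) * normal_tail_bound \<sigma> (c * sqrt L / 2)"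
    by simp
  moreover have "correlation_event n \<sigma> A b (c * sqrt (L / real n)) J
      = space (gauss_noise n \<sigma>) - (\<Union>j\<in>J. deviation j)"
    unfolding correlation_event_def deviation_def by (auto simp: not_less)
  moreover have "(\<Union>j\<in>J. deviation j) \<in> events"
    using deviation_events J by auto
  ultimately show ?thesis
    using prob_compl[of "\<Union>j\<in>J. deviation j"] by simp
qed

lemma prob_correlation_events_Int_ge:
  fixes A :: "'j \<Rightarrow> nat \<Rightarrow> real"
  assumes \<sigma>: "\<sigma> > 0" and c: "c > 0" and n: "n > 0" and L: "0 < L'" "L' \<le> L"
    and J: "finite J" "J' \<subseteq> J"
    and cols: "\<And>j. j \<in> J \<Longrightarrow> dotv n (A j) (A j) \<le> real n"
    and bias: "\<And>j. j \<in> J \<Longrightarrow> \<bar>dotv n (A j) b\<bar> \<le> c * sqrt (real n * L') / 2"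
  shows "measure (gauss_noise n \<sigma>) (correlation_event n \<sigma> A b (c * sqrt (L / real n)) J
        \<inter> correlation_event n \<sigma> A b (c * sqrt (L' / real n)) J')
    \<ge> 1 - real (card J) * normal_tail_bound \<sigma> (c * sqrt L / 2)
        - real (card J') * normal_tail_bound \<sigma> (c * sqrt L' / 2)"
proof -
  interpret prob_space "gauss_noise n \<sigma>"
    by (rule prob_space_gauss_noise[OF \<sigma>])
  have "finite J'"
    using J by (rule finite_subset[rotated])
  have "c * sqrt (real n * L') / 2 \<le> c * sqrt (real n * L) / 2"
    using c L by (intro divide_right_mono mult_left_mono real_sqrt_le_mono) auto
  then have "\<bar>dotv n (A j) b\<bar> \<le> c * sqrt (real n * L) / 2" if "j \<in> J" for j
    using bias[OF that] by linarith
  then have "prob (correlation_event n \<sigma> A b (c * sqrt (L / real n)) J)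
      \<ge> 1 - real (card J) * normal_tail_bound \<sigma> (c * sqrt L / 2)"
    using L by (intro prob_correlation_event_ge[OF \<sigma> c n _ J(1) cols]) auto
  moreover have "prob (correlation_event n \<sigma> A b (c * sqrt (L' / real n)) J')
      \<ge> 1 - real (card J') * normal_tail_bound \<sigma> (c * sqrt L' / 2)"
    using J L by (intro prob_correlation_event_ge[OF \<sigma> c n _ \<open>finite J'\<close> cols bias]) auto
  ultimately show ?thesis
    using prob_Int_ge[OF correlation_event_in_sets[OF J(1), of n \<sigma> A b "c * sqrt (L / real n)"]
        correlation_event_in_sets[OF \<open>finite J'\<close>, of n \<sigma> A b "c * sqrt (L' / real n)"]]
    by linarith
qed

section \<open>The explicit bound\<close>

lemma pos_and_one_less_exponent:
  assumes "\<sigma> > 0" and "c > 2 * sqrt 2 * \<sigma>"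
  shows "c > 0" and "c\<^sup>2 / (8 * \<sigma>\<^sup>2) > 1"
proof -
  show "c > 0"
    using assms by (auto intro: order_le_less_trans[OF _ assms(2)])
  have "(2 * sqrt 2 * \<sigma>)\<^sup>2 < c\<^sup>2"
    using assms by (intro power_strict_mono) auto
  then show "c\<^sup>2 / (8 * \<sigma>\<^sup>2) > 1"
    using assms(1) by (simp add: power_mult_distrib)
qed

lemma real_mult_normal_tail_bound_half_sqrt_ln:
  assumes \<sigma>: "\<sigma> > 0" and c: "c > 0" and x: "x > 1"
  shows "x * normal_tail_bound \<sigma> (c * sqrt (ln x) / 2)
    = 2 * sqrt 2 * \<sigma> / (c * sqrt (pi * ln x)) * x powr (1 - c\<^sup>2 / (8 * \<sigma>\<^sup>2))"
proof -
  have "(c * sqrt (ln x) / 2)\<^sup>2 / (2 * \<sigma>\<^sup>2) = c\<^sup>2 / (8 * \<sigma>\<^sup>2) * ln x"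
    using x by (simp add: power_mult_distrib power_divide)
  then have "x powr (1 - c\<^sup>2 / (8 * \<sigma>\<^sup>2)) = x * exp (- (c * sqrt (ln x) / 2)\<^sup>2 / (2 * \<sigma>\<^sup>2))"
    using x by (simp add: powr_diff powr_def exp_diff exp_minus field_simps)
  moreover have "2 * \<sigma> / (c * sqrt (ln x) / 2 * sqrt (2 * pi)) = 2 * sqrt 2 * \<sigma> / (c * sqrt (pi * ln x))"
  proof -
    have "sqrt 2 * sqrt 2 = (2::real)" by simp
    then show ?thesis
      using \<sigma> c x by (simp add: real_sqrt_mult field_simps)
  qed
  ultimately show ?thesis
    unfolding normal_tail_bound_def by (simp add: mult_ac)
qed


lemma real_mult_normal_tail_bound_ln_antimono:
  assumes \<sigma>: "\<sigma> > 0" and c: "c > 2 * sqrt 2 * \<sigma>" and x: "1 < x" "x \<le> y"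
  shows "y * normal_tail_bound \<sigma> (c * sqrt (ln y) / 2) \<le> x * normal_tail_bound \<sigma> (c * sqrt (ln x) / 2)"
proof -
  note c_facts = pos_and_one_less_exponent[OF \<sigma> c]
  have "2 * sqrt 2 * \<sigma> / (c * sqrt (pi * ln y)) * y powr (1 - c\<^sup>2 / (8 * \<sigma>\<^sup>2))
      \<le> 2 * sqrt 2 * \<sigma> / (c * sqrt (pi * ln x)) * x powr (1 - c\<^sup>2 / (8 * \<sigma>\<^sup>2))"
    using \<sigma> x c_facts by (intro mult_mono divide_left_mono mult_left_mono real_sqrt_le_mono powr_mono2') auto
  then show ?thesis
    using x real_mult_normal_tail_bound_half_sqrt_ln[OF \<sigma> c_facts(1)] by simp
qed

lemma real_mult_normal_tail_bound_ln_tendsto_0: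
  assumes \<sigma>: "\<sigma> > 0" and c: "c > 2 * sqrt 2 * \<sigma>"
  shows "((\<lambda>m. real m * normal_tail_bound \<sigma> (c * sqrt (ln (real m)) / 2)) \<longlongrightarrow> 0) sequentially"
proof -
  note c_facts = pos_and_one_less_exponent[OF \<sigma> c]
  have "((\<lambda>m. 1 / sqrt (pi * ln (real m))) \<longlongrightarrow> 0) sequentially"
    by real_asymp
  then have "((\<lambda>m. 2 * sqrt 2 * \<sigma> / c * (1 / sqrt (pi * ln (real m))) * real m powr (1 - c\<^sup>2 / (8 * \<sigma>\<^sup>2)))
      \<longlongrightarrow> 2 * sqrt 2 * \<sigma> / c * 0 * 0) sequentially"
    using c_facts(2) by (intro tendsto_mult tendsto_const tendsto_neg_powr filterlim_real_sequentially) auto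
  then have "((\<lambda>m. 2 * sqrt 2 * \<sigma> / c * (1 / sqrt (pi * ln (real m))) * real m powr (1 - c\<^sup>2 / (8 * \<sigma>\<^sup>2)))
      \<longlongrightarrow> 0) sequentially"
    by simp
  moreover have "\<forall>\<^sub>F m in sequentially. 2 * sqrt 2 * \<sigma> / c * (1 / sqrt (pi * ln (real m)))
      * real m powr (1 - c\<^sup>2 / (8 * \<sigma>\<^sup>2)) = real m * normal_tail_bound \<sigma> (c * sqrt (ln (real m)) / 2)"
    using eventually_gt_at_top[of 1]
    by eventually_elim (use \<sigma> c_facts(1) in \<open>simp add: real_mult_normal_tail_bound_half_sqrt_ln\<close>)
  ultimately show ?thesis
    by (rule Lim_transform_eventually)
qed

lemma lemma2_bound_eq:
  assumes \<sigma>: "\<sigma> > 0" and c: "c > 0" and n: "n > 1" and p: "p > 1"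
  shows "lemma2_bound \<sigma> c n p s
    = 1 - 2 * (real p * normal_tail_bound \<sigma> (c * sqrt (ln (real p)) / 2))
        - real s * normal_tail_bound \<sigma> (c * sqrt (ln (real n)) / 2)"
proof -
  have "normal_tail_bound \<sigma> (c * sqrt (ln (real n)) / 2)
      = real n * normal_tail_bound \<sigma> (c * sqrt (ln (real n)) / 2) / real n"
    using n by simp
  also have "\<dots> = 2 * sqrt 2 * \<sigma> / (c * sqrt (pi * ln (real n))) * real n powr (- c\<^sup>2 / (8 * \<sigma>\<^sup>2))"
    using n by (simp add: real_mult_normal_tail_bound_half_sqrt_ln[OF \<sigma> c] powr_diff powr_minus field_simps)
  finally show ?thesis
    unfolding lemma2_bound_def using real_mult_normal_tail_bound_half_sqrt_ln[OF \<sigma> c, of "real p"] p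
    by (simp add: mult_ac)
qed


lemma lemma2_bound_le_union_bound:
  assumes \<sigma>: "\<sigma> > 0" and c: "c > 0" and n: "1 < n" "n \<le> p" and K: "K \<le> p"
  shows "lemma2_bound \<sigma> c n p s
    \<le> 1 - real (p + K) * normal_tail_bound \<sigma> (c * sqrt (ln (real p)) / 2)
        - real s * normal_tail_bound \<sigma> (c * sqrt (ln (real n)) / 2)"
proof -
  have "0 \<le> normal_tail_bound \<sigma> (c * sqrt (ln (real p)) / 2)"
    using \<sigma> c n by (intro normal_tail_bound_nonneg) auto
  then have "real (p + K) * normal_tail_bound \<sigma> (c * sqrt (ln (real p)) / 2)
      \<le> 2 * (real p * normal_tail_bound \<sigma> (c * sqrt (ln (real p)) / 2))"
    using K by (metis mult.assoc mult_right_mono of_nat_add of_nat_mono add_left_mono mult_2)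
  then show ?thesis
    using lemma2_bound_eq[OF \<sigma> c, of n p s] n by linarith
qed

lemma lemma2_bound_sandwich:
  assumes \<sigma>: "\<sigma> > 0" and c: "c > 2 * sqrt 2 * \<sigma>" and m: "1 < m" "m \<le> p" "s \<le> m"
  shows "1 - 3 * (real m * normal_tail_bound \<sigma> (c * sqrt (ln (real m)) / 2)) \<le> lemma2_bound \<sigma> c m p s"
    and "lemma2_bound \<sigma> c m p s \<le> 1"
proof -
  note c_facts = pos_and_one_less_exponent[OF \<sigma> c]
  have tail_nonneg: "0 \<le> normal_tail_bound \<sigma> (c * sqrt (ln x) / 2)" if "1 \<le> x" for x
    using \<sigma> c_facts(1) that by (intro normal_tail_bound_nonneg) auto
  have "real p * normal_tail_bound \<sigma> (c * sqrt (ln (real p)) / 2)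
      \<le> real m * normal_tail_bound \<sigma> (c * sqrt (ln (real m)) / 2)"
    using m by (intro real_mult_normal_tail_bound_ln_antimono[OF \<sigma> c]) auto
  moreover have "real s * normal_tail_bound \<sigma> (c * sqrt (ln (real m)) / 2)
      \<le> real m * normal_tail_bound \<sigma> (c * sqrt (ln (real m)) / 2)"
    using m tail_nonneg[of "real m"] by (intro mult_right_mono) auto
  moreover have "0 \<le> real p * normal_tail_bound \<sigma> (c * sqrt (ln (real p)) / 2)"
    using m tail_nonneg[of "real p"] by simp
  moreover have "0 \<le> real s * normal_tail_bound \<sigma> (c * sqrt (ln (real m)) / 2)"
    using m tail_nonneg[of "real m"] by simp
  ultimately show "1 - 3 * (real m * normal_tail_bound \<sigma> (c * sqrt (ln (real m)) / 2)) \<le> lemma2_bound \<sigma> c m p s"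
    and "lemma2_bound \<sigma> c m p s \<le> 1"
    using lemma2_bound_eq[OF \<sigma> c_facts(1), of m p s] m by linarith+
qed

lemma lemma2_bound_tendsto_1:
  assumes \<sigma>: "\<sigma> > 0" and c: "c > 2 * sqrt 2 * \<sigma>" and ps: "\<forall>m. m \<le> pp m \<and> ss m \<le> m"
  shows "((\<lambda>m. lemma2_bound \<sigma> c m (pp m) (ss m)) \<longlongrightarrow> 1) sequentially"
proof (rule tendsto_sandwich)
  show "((\<lambda>m. 1 - 3 * (real m * normal_tail_bound \<sigma> (c * sqrt (ln (real m)) / 2))) \<longlongrightarrow> 1) sequentially"
    using tendsto_diff[OF tendsto_const tendsto_mult_left[OF real_mult_normal_tail_bound_ln_tendsto_0[OF \<sigma> c]],
        of 1 3]
    by simp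
  show "\<forall>\<^sub>F m in sequentially.
      1 - 3 * (real m * normal_tail_bound \<sigma> (c * sqrt (ln (real m)) / 2)) \<le> lemma2_bound \<sigma> c m (pp m) (ss m)"
    using eventually_gt_at_top[of 1]
    by eventually_elim (use ps in \<open>intro lemma2_bound_sandwich(1)[OF \<sigma> c], auto\<close>)
  show "\<forall>\<^sub>F m in sequentially. lemma2_bound \<sigma> c m (pp m) (ss m) \<le> 1"
    using eventually_gt_at_top[of 1]
    by eventually_elim (use ps in \<open>intro lemma2_bound_sandwich(2)[OF \<sigma> c], auto\<close>)
qed (rule tendsto_const)

text \<open>The eigenvector hypotheses only give \<open>F\<close> and \<open>Fhat\<close> their meaning; the proof uses nothing
  about them beyond the angle condition.\<close>
theorem lemma2:
  fixes n p q K :: nat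
    and X :: "nat \<Rightarrow> nat \<Rightarrow> real"   \<comment> \<open>n x p design, conditioned on\<close>
    and W :: "nat \<Rightarrow> nat \<Rightarrow> real"   \<comment> \<open>n x q covariate matrix, conditioned on\<close>
    and SigmaW :: "nat \<Rightarrow> nat \<Rightarrow> real" \<comment> \<open>q x q covariance of the rows of W\<close>
    and u uhat :: "nat \<Rightarrow> nat \<Rightarrow> real"
    and beta0 gamma0 :: "nat \<Rightarrow> real"
    and \<sigma> T c2 :: real
  defines "F \<equiv> factor_mat n q W u"
    and "Fhat \<equiv> factor_mat n q W uhat"
    and "s \<equiv> card (supp p beta0) + card (supp K gamma0)"
    and "epst \<equiv> (\<lambda>e :: nat \<Rightarrow> real. \<lambda>i. (\<Sum>j<K. (factor_mat n q W u i j - factor_mat n q W uhat i j) * gamma0 j) + e i)"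
  assumes n2: "n \<ge> 2" and pn: "p \<ge> n" and pK: "p \<ge> K"
    and sig: "\<sigma> > 0" and Tpos: "T > 0" and c2: "c2 > 2 * sqrt 2 * \<sigma>"
    and gam: "\<forall>j<K. \<bar>gamma0 j\<bar> \<le> T"
    and Ssym: "\<forall>a<q. \<forall>b<q. SigmaW a b = SigmaW b a"
    and u_top: "top_eigvecs q SigmaW K u"
    and uhat_top: "top_eigvecs q (sample_cov n W) K uhat"
    and Xcols: "\<forall>k<p. normv n (col X k) = sqrt (real n)"
    and angle: "\<forall>j<K. vcos n (col Fhat j) (col F j)
                     \<ge> 1 - c2\<^sup>2 * ln (real n) / (8 * real K ^ 2 * T\<^sup>2 * real n)"
  shows "measure (gauss_noise n \<sigma>)
           ({e \<in> space (gauss_noise n \<sigma>).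
               (\<forall>k<p. \<bar>dotv n (col X k) (epst e) / real n\<bar> \<le> c2 * sqrt (ln (real p) / real n)) \<and>
               (\<forall>j<K. \<bar>dotv n (col Fhat j) (epst e) / real n\<bar> \<le> c2 * sqrt (ln (real p) / real n))}
            \<inter>
            {e \<in> space (gauss_noise n \<sigma>).
               (\<forall>k\<in>supp p beta0. \<bar>dotv n (col X k) (epst e) / real n\<bar> \<le> c2 * sqrt (ln (real n) / real n)) \<and>
               (\<forall>j\<in>supp K gamma0. \<bar>dotv n (col Fhat j) (epst e) / real n\<bar> \<le> c2 * sqrt (ln (real n) / real n))})
         \<ge> lemma2_bound \<sigma> c2 n p s
       \<and> (\<forall>pp ss :: nat \<Rightarrow> nat. (\<forall>m. pp m \<ge> m \<and> ss m \<le> m) \<longrightarrow>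
            ((\<lambda>m. lemma2_bound \<sigma> c2 m (pp m) (ss m)) \<longlongrightarrow> 1) sequentially)"
proof -
  define A where "A = case_sum (col X) (col Fhat)"
  define b where "b = (\<lambda>i. \<Sum>j<K. (F i j - Fhat i j) * gamma0 j)"
  define J_all where "J_all = {..<p} <+> {..<K}"
  define J_supp where "J_supp = supp p beta0 <+> supp K gamma0"
  have J: "finite J_all" "J_supp \<subseteq> J_all" "card J_all = p + K" "card J_supp = s"
    unfolding J_all_def J_supp_def s_def supp_def by (auto simp: card_Plus)
  note c2_pos = pos_and_one_less_exponent(1)[OF sig c2]
  have cols: "dotv n (A x) (A x) \<le> real n" if "x \<in> J_all" for x
    using dotv_design_col_self_le[OF Xcols that[unfolded J_all_def]] unfolding A_def Fhat_def .
  have bias: "\<bar>dotv n (A x) b\<bar> \<le> c2 * sqrt (real n * ln (real n)) / 2" if "x \<in> J_all" for x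
    unfolding b_def F_def Fhat_def using n2
    by (intro abs_dotv_factor_mat_diff_le[OF Tpos c2_pos _ _ gam angle[unfolded F_def Fhat_def] cols[OF that]])
      auto
  have "lemma2_bound \<sigma> c2 n p s \<le> measure (gauss_noise n \<sigma>)
      (correlation_event n \<sigma> A b (c2 * sqrt (ln (real p) / real n)) J_all
        \<inter> correlation_event n \<sigma> A b (c2 * sqrt (ln (real n) / real n)) J_supp)"
    using lemma2_bound_le_union_bound[OF sig c2_pos _ pn pK, of s] n2 J(3,4)
      prob_correlation_events_Int_ge[OF sig c2_pos _ _ _ J(1,2) cols bias, of "ln (real p)"] pn
    by fastforce
  then show ?thesis
    using lemma2_bound_tendsto_1[OF sig c2]
    unfolding correlation_event_def A_def b_def J_all_def J_supp_def epst_def F_def Fhat_def ball_Plus_iff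
    by (simp add: Ball_def)
qed

end
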